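(* Let $\gamma_N>0$ with $\gamma_N\to0$, and for $a>0$ put $a_N=a\gamma_N$. For each $N$ let $P_{N,a_N}$ be the probability on sequences $(n_j)_{j\ge0}$ of nonnegative integers with $\sum_jn_j=N$ given by $P_{N,a_N}((n_j))\propto e^{-a_N\sum_jjn_j}$, and $\langle n_0\rangle_{N,a_N}$ the expectation of $n_0$. If $N\gamma_N/\ln N\to0$, then for every $a>0$, $\frac1N\langle n_0\rangle_{N,a_N}\to0$ (i.e. $T_c=0$: no Bose–Einstein condensation at any positive temperature). If $N\gamma_N/\ln N\to\infty$, then for every $a>0$, $\frac1N\langle n_0\rangle_{N,a_N}\to1$ (i.e. $T_c=\infty$ and complete Bose–Einstein condensation at all finite temperatures).
   Context: This is the canonical ensemble of $N$ noninteracting bosons in a one-dimensional harmonic trap of scaled frequency $\omega\gamma_N$ at inverse temperature $\beta$, with $a=\hbar\omega\beta$ (so $a>0$ corresponds to $0<T<\infty$). *)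

theory Defs
  imports "HOL-Analysis.Analysis"
begin

definition occ_configs :: "nat \<Rightarrow> (nat \<Rightarrow> nat) set" where
  "occ_configs N = {n. finite {j. n j \<noteq> 0} \<and> (\<Sum>j\<in>{j. n j \<noteq> 0}. n j) = N}"

definition occ_energy :: "(nat \<Rightarrow> nat) \<Rightarrow> nat" where
  "occ_energy n = (\<Sum>j\<in>{j. n j \<noteq> 0}. j * n j)"

definition boltz_weight :: "real \<Rightarrow> (nat \<Rightarrow> nat) \<Rightarrow> real" where
  "boltz_weight b n = exp (- b * real (occ_energy n))"

definition partition_fn :: "nat \<Rightarrow> real \<Rightarrow> real" where
  "partition_fn N b = (\<Sum>\<^sub>\<infinity> n\<in>occ_configs N. boltz_weight b n)"

definition mean_n0 :: "nat \<Rightarrow> real \<Rightarrow> real" where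
  "mean_n0 N b = (\<Sum>\<^sub>\<infinity> n\<in>occ_configs N. real (n 0) * boltz_weight b n) / partition_fn N b"

end

theory Submission
  imports Defs
begin

text \<open>A configuration of N + 1 bosons either has an occupied ground level, and then arises from
  a configuration of N bosons by adding a ground particle (same energy), or it arises from a
  configuration of N + 1 bosons by raising every particle one level (energy increased by N + 1).
  Hence Z(N+1) = Z(N) + exp(-b(N+1)) Z(N+1), while the unnormalised first moment of n_0 grows by
  Z(N); so the mean satisfies m(N+1) = (1 - exp(-b(N+1))) (1 + m(N)). Iterating this recursion
  gives m(N) \<le> exp(bN) and N - m(N) \<le> 2 ln N / b + 2, and with b = a \<gamma>_N these bounds yield
  the limits 0 and 1 in the two regimes. The same decomposition, applied to configurations
  supported below a fixed level, bounds every finite partial sum of the weights by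
  (1 - exp(-b))^(-N), which gives summability.\<close>

lemma support_subset_lessThan:
  fixes n :: "nat \<Rightarrow> 'a::zero"
  shows "\<forall>j\<ge>M. n j = 0 \<Longrightarrow> {j. n j \<noteq> 0} \<subseteq> {..<M}"
  by (metis (mono_tags) lessThan_iff mem_Collect_eq not_le subsetI)

lemma sum_support_eq_sum_lessThan:
  fixes n :: "nat \<Rightarrow> 'a::zero" and h :: "nat \<Rightarrow> 'a \<Rightarrow> 'b::comm_monoid_add"
  assumes "\<forall>j\<ge>M. n j = 0" and "\<And>j. h j 0 = 0"
  shows "(\<Sum>j\<in>{j. n j \<noteq> 0}. h j (n j)) = (\<Sum>j<M. h j (n j))"
  by (rule sum.mono_neutral_left) (simp_all add: assms support_subset_lessThan)

lemma occ_configs_eventually_zero: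
  "n \<in> occ_configs N \<Longrightarrow> \<forall>\<^sub>F j in sequentially. n j = 0"
proof -
  assume "n \<in> occ_configs N"
  then obtain m where "\<forall>j\<in>{j. n j \<noteq> 0}. j \<le> m"
    unfolding occ_configs_def using finite_nat_set_iff_bounded_le by blast
  then have "\<forall>j\<ge>Suc m. n j = 0"
    using not_less_eq_eq by blast
  then show ?thesis
    unfolding eventually_sequentially by blast
qed

lemma occ_configs_iff_sum:
  assumes "\<forall>j\<ge>M. n j = 0"
  shows "n \<in> occ_configs N \<longleftrightarrow> (\<Sum>j<M. n j) = N"
proof -
  have "finite {j. n j \<noteq> 0}"
    using finite_subset[OF support_subset_lessThan[OF assms]] by blast
  then show ?thesis
    using sum_support_eq_sum_lessThan[OF assms, of "\<lambda>_ v. v"] by (simp add: occ_configs_def)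
qed

lemma occ_energy_eq_sum:
  "\<forall>j\<ge>M. n j = 0 \<Longrightarrow> occ_energy n = (\<Sum>j<M. j * n j)"
  unfolding occ_energy_def by (rule sum_support_eq_sum_lessThan) simp_all

lemma occ_configs_le: "n \<in> occ_configs N \<Longrightarrow> n j \<le> N"
proof -
  assume n: "n \<in> occ_configs N"
  obtain M where M: "\<forall>j\<ge>M. n j = 0"
    using occ_configs_eventually_zero[OF n] unfolding eventually_sequentially by blast
  have "n j \<le> (\<Sum>i<Suc (max j M). n i)"
    by (rule member_le_sum) simp_all
  also have "\<dots> = N"
    using n M occ_configs_iff_sum[of "Suc (max j M)" n N] by simp
  finally show ?thesis .
qed

lemma occ_configs_0: "occ_configs 0 = {\<lambda>_. 0}"
proof (intro equalityI subsetI)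
  fix n assume "n \<in> occ_configs 0"
  then show "n \<in> {\<lambda>_. 0}" using occ_configs_le[of n 0] by auto
qed (simp add: occ_configs_iff_sum[of 0])

definition add_ground :: "(nat \<Rightarrow> nat) \<Rightarrow> nat \<Rightarrow> nat" where
  "add_ground n = n(0 := Suc (n 0))"

definition raise_levels :: "(nat \<Rightarrow> nat) \<Rightarrow> nat \<Rightarrow> nat" where
  "raise_levels n = (\<lambda>j. if j = 0 then 0 else n (j - 1))"

lemma add_ground_0 [simp]: "add_ground n 0 = Suc (n 0)"
  by (simp add: add_ground_def)

lemma add_ground_Suc [simp]: "add_ground n (Suc j) = n (Suc j)"
  by (simp add: add_ground_def)

lemma raise_levels_0 [simp]: "raise_levels n 0 = 0"
  by (simp add: raise_levels_def)

lemma raise_levels_Suc [simp]: "raise_levels n (Suc j) = n j"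
  by (simp add: raise_levels_def)

lemma inj_add_ground: "inj add_ground"
proof (rule injI, rule ext)
  fix x y :: "nat \<Rightarrow> nat" and j
  assume "add_ground x = add_ground y"
  then have "add_ground x j = add_ground y j" by simp
  then show "x j = y j" by (cases j) simp_all
qed

lemma inj_raise_levels: "inj raise_levels"
proof (rule injI, rule ext)
  fix x y :: "nat \<Rightarrow> nat" and j
  assume "raise_levels x = raise_levels y"
  then have "raise_levels x (Suc j) = raise_levels y (Suc j)" by simp
  then show "x j = y j" by simp
qed

lemma add_ground_pred: "n 0 \<noteq> 0 \<Longrightarrow> add_ground (n(0 := n 0 - 1)) = n"
  by (auto simp: add_ground_def)

lemma raise_levels_tail: "n 0 = 0 \<Longrightarrow> raise_levels (\<lambda>j. n (Suc j)) = n"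
proof
  fix j assume "n 0 = 0"
  then show "raise_levels (\<lambda>j. n (Suc j)) j = n j" by (cases j) simp_all
qed

lemma add_ground_image_iff: "n \<in> add_ground ` A \<longleftrightarrow> n 0 \<noteq> 0 \<and> n(0 := n 0 - 1) \<in> A"
proof
  assume "n \<in> add_ground ` A"
  then show "n 0 \<noteq> 0 \<and> n(0 := n 0 - 1) \<in> A"
    by (auto simp: add_ground_def)
next
  assume n: "n 0 \<noteq> 0 \<and> n(0 := n 0 - 1) \<in> A"
  then have "n = add_ground (n(0 := n 0 - 1))"
    by (intro add_ground_pred[symmetric]) blast
  with n show "n \<in> add_ground ` A" by blast
qed

lemma raise_levels_image_iff: "n \<in> raise_levels ` A \<longleftrightarrow> n 0 = 0 \<and> (\<lambda>j. n (Suc j)) \<in> A"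
proof
  assume "n \<in> raise_levels ` A"
  then show "n 0 = 0 \<and> (\<lambda>j. n (Suc j)) \<in> A"
    by auto
next
  assume n: "n 0 = 0 \<and> (\<lambda>j. n (Suc j)) \<in> A"
  then have "n = raise_levels (\<lambda>j. n (Suc j))"
    by (intro raise_levels_tail[symmetric]) blast
  with n show "n \<in> raise_levels ` A" by blast
qed

lemma add_ground_mem_iff: "add_ground n \<in> occ_configs (Suc N) \<longleftrightarrow> n \<in> occ_configs N"
proof (cases "\<forall>\<^sub>F j in sequentially. n j = 0")
  case True
  then obtain M where "\<forall>j\<ge>M. n j = 0"
    unfolding eventually_sequentially by blast
  then have n: "\<forall>j\<ge>Suc M. n j = 0" and ag: "\<forall>j\<ge>Suc M. add_ground n j = 0"
    by (auto simp: add_ground_def)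
  have "(\<Sum>j<Suc M. add_ground n j) = Suc (\<Sum>j<Suc M. n j)"
    by (simp add: sum.lessThan_Suc_shift del: sum.lessThan_Suc)
  then show ?thesis
    using occ_configs_iff_sum[OF n] occ_configs_iff_sum[OF ag] by simp
next
  case False
  moreover have "(\<forall>\<^sub>F j in sequentially. add_ground n j = 0) \<longleftrightarrow> (\<forall>\<^sub>F j in sequentially. n j = 0)"
    by (simp flip: eventually_sequentially_Suc[of "\<lambda>j. add_ground n j = 0"]
                   eventually_sequentially_Suc[of "\<lambda>j. n j = 0"])
  ultimately show ?thesis
    using occ_configs_eventually_zero by blast
qed

lemma raise_levels_mem_iff: "raise_levels n \<in> occ_configs N \<longleftrightarrow> n \<in> occ_configs N"
proof (cases "\<forall>\<^sub>F j in sequentially. n j = 0")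
  case True
  then obtain M where n: "\<forall>j\<ge>M. n j = 0"
    unfolding eventually_sequentially by blast
  then have rl: "\<forall>j\<ge>Suc M. raise_levels n j = 0"
    by (auto simp: raise_levels_def)
  have "(\<Sum>j<Suc M. raise_levels n j) = (\<Sum>j<M. n j)"
    by (simp add: sum.lessThan_Suc_shift del: sum.lessThan_Suc)
  then show ?thesis
    using occ_configs_iff_sum[OF n] occ_configs_iff_sum[OF rl] by simp
next
  case False
  moreover have "(\<forall>\<^sub>F j in sequentially. raise_levels n j = 0) \<longleftrightarrow> (\<forall>\<^sub>F j in sequentially. n j = 0)"
    by (simp flip: eventually_sequentially_Suc[of "\<lambda>j. raise_levels n j = 0"])
  ultimately show ?thesis
    using occ_configs_eventually_zero by blast
qed

lemma occ_configs_Suc_iff: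
  "n \<in> occ_configs (Suc N) \<longleftrightarrow>
     (n 0 \<noteq> 0 \<and> n(0 := n 0 - 1) \<in> occ_configs N) \<or> (n 0 = 0 \<and> (\<lambda>j. n (Suc j)) \<in> occ_configs (Suc N))"
proof (cases "n 0 = 0")
  case True
  then show ?thesis
    using raise_levels_mem_iff[of "\<lambda>j. n (Suc j)"] by (simp add: raise_levels_tail)
next
  case False
  have "add_ground (n(0 := n 0 - 1)) = n"
    using False by (rule add_ground_pred)
  then have "n \<in> occ_configs (Suc N) \<longleftrightarrow> n(0 := n 0 - 1) \<in> occ_configs N"
    using add_ground_mem_iff[of "n(0 := n 0 - 1)" N] by simp
  with False show ?thesis by simp
qed

lemma occ_configs_Suc:
  "occ_configs (Suc N) = add_ground ` occ_configs N \<union> raise_levels ` occ_configs (Suc N)"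
  by (rule set_eqI) (metis Un_iff occ_configs_Suc_iff add_ground_image_iff raise_levels_image_iff)

lemma add_ground_neq_raise_levels: "add_ground m \<noteq> raise_levels n"
proof
  assume "add_ground m = raise_levels n"
  then have "add_ground m 0 = raise_levels n 0" by simp
  then show False by simp
qed

lemma add_ground_raise_levels_disjoint: "add_ground ` A \<inter> raise_levels ` B = {}"
  using add_ground_neq_raise_levels by blast

lemma infsum_add_ground_raise_levels:
  fixes f :: "(nat \<Rightarrow> nat) \<Rightarrow> real"
  assumes "f summable_on add_ground ` A \<union> raise_levels ` B"
  shows "infsum f (add_ground ` A \<union> raise_levels ` B)
           = infsum (f \<circ> add_ground) A + infsum (f \<circ> raise_levels) B"
proof -
  have "f summable_on add_ground ` A" "f summable_on raise_levels ` B"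
    using assms summable_on_subset by blast+
  then have "infsum f (add_ground ` A \<union> raise_levels ` B)
               = infsum f (add_ground ` A) + infsum f (raise_levels ` B)"
    using add_ground_raise_levels_disjoint by (rule infsum_Un_disjoint)
  then show ?thesis
    by (simp add: infsum_reindex inj_on_subset[OF inj_add_ground] inj_on_subset[OF inj_raise_levels])
qed

lemma occ_energy_add_ground:
  assumes "n \<in> occ_configs N"
  shows "occ_energy (add_ground n) = occ_energy n"
proof -
  obtain M where "\<forall>j\<ge>M. n j = 0"
    using occ_configs_eventually_zero[OF assms] unfolding eventually_sequentially by blast
  then have n: "\<forall>j\<ge>Suc M. n j = 0" and ag: "\<forall>j\<ge>Suc M. add_ground n j = 0"
    by (auto simp: add_ground_def)
  have "(\<Sum>j<Suc M. j * add_ground n j) = (\<Sum>j<Suc M. j * n j)"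
    by (simp add: sum.lessThan_Suc_shift del: sum.lessThan_Suc)
  then show ?thesis
    by (simp add: occ_energy_eq_sum[OF n] occ_energy_eq_sum[OF ag])
qed

lemma occ_energy_raise_levels:
  assumes "n \<in> occ_configs N"
  shows "occ_energy (raise_levels n) = occ_energy n + N"
proof -
  obtain M where n: "\<forall>j\<ge>M. n j = 0"
    using occ_configs_eventually_zero[OF assms] unfolding eventually_sequentially by blast
  then have rl: "\<forall>j\<ge>Suc M. raise_levels n j = 0"
    by (auto simp: raise_levels_def)
  have "(\<Sum>j<Suc M. j * raise_levels n j) = (\<Sum>j<M. j * n j) + (\<Sum>j<M. n j)"
    by (simp add: sum.lessThan_Suc_shift sum.distrib del: sum.lessThan_Suc)
  then show ?thesis
    using assms by (simp add: occ_energy_eq_sum[OF n] occ_energy_eq_sum[OF rl] occ_configs_iff_sum[OF n])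
qed

lemma boltz_weight_add_ground:
  "n \<in> occ_configs N \<Longrightarrow> boltz_weight b (add_ground n) = boltz_weight b n"
  by (simp add: boltz_weight_def occ_energy_add_ground)

lemma boltz_weight_raise_levels:
  "n \<in> occ_configs N \<Longrightarrow> boltz_weight b (raise_levels n) = exp (- b * real N) * boltz_weight b n"
  by (simp add: boltz_weight_def occ_energy_raise_levels algebra_simps flip: exp_add)

lemma boltz_weight_nonneg: "0 \<le> boltz_weight b n"
  by (simp add: boltz_weight_def)

lemma boltz_weight_zero [simp]: "boltz_weight b (\<lambda>_. 0) = 1"
  by (simp add: boltz_weight_def occ_energy_def)

lemma infsum_boltz_weight_decompose:
  assumes "A \<subseteq> occ_configs N" and "B \<subseteq> occ_configs (Suc N)"
    and "boltz_weight b summable_on add_ground ` A \<union> raise_levels ` B"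
  shows "infsum (boltz_weight b) (add_ground ` A \<union> raise_levels ` B)
           = infsum (boltz_weight b) A + exp (- b * real (Suc N)) * infsum (boltz_weight b) B"
proof -
  have "infsum (boltz_weight b \<circ> add_ground) A = infsum (boltz_weight b) A"
    using assms(1) by (intro infsum_cong) (auto simp: boltz_weight_add_ground)
  moreover have "infsum (boltz_weight b \<circ> raise_levels) B
                   = infsum (\<lambda>n. exp (- b * real (Suc N)) * boltz_weight b n) B"
    using assms(2) by (intro infsum_cong) (auto simp: boltz_weight_raise_levels simp del: of_nat_Suc)
  ultimately show ?thesis
    using infsum_add_ground_raise_levels[OF assms(3)] by (simp add: infsum_cmult_right')
qed

definition occ_configs_below :: "nat \<Rightarrow> nat \<Rightarrow> (nat \<Rightarrow> nat) set" where
  "occ_configs_below N M = {n \<in> occ_configs N. \<forall>j\<ge>M. n j = 0}"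

lemma finite_occ_configs_below: "finite (occ_configs_below N M)"
proof (rule finite_subset)
  show "occ_configs_below N M
          \<subseteq> {n. \<forall>j. (j \<in> {..<M} \<longrightarrow> n j \<in> {..N}) \<and> (j \<notin> {..<M} \<longrightarrow> n j = 0)}"
    by (auto simp: occ_configs_below_def occ_configs_le)
qed (intro finite_set_of_finite_funs finite_lessThan finite_atMost)

lemma occ_configs_below_trivial: "N = 0 \<or> M = 0 \<Longrightarrow> occ_configs_below N M \<subseteq> {\<lambda>_. 0}"
  by (auto simp: occ_configs_below_def occ_configs_0)

lemma add_ground_vanish_iff: "(\<forall>j\<ge>Suc M. add_ground n j = 0) \<longleftrightarrow> (\<forall>j\<ge>Suc M. n j = 0)"
  by (auto simp: add_ground_def)

lemma raise_levels_vanish_iff: "(\<forall>j\<ge>Suc M. raise_levels n j = 0) \<longleftrightarrow> (\<forall>j\<ge>M. n j = 0)"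
  by (metis Suc_le_D Suc_le_mono raise_levels_Suc)

lemma occ_configs_below_Suc_Suc:
  "occ_configs_below (Suc N) (Suc M)
     = add_ground ` occ_configs_below N (Suc M) \<union> raise_levels ` occ_configs_below (Suc N) M"
proof -
  have filter_image: "{y \<in> f ` A. P y} = f ` {x \<in> A. P (f x)}"
    for f :: "(nat \<Rightarrow> nat) \<Rightarrow> nat \<Rightarrow> nat" and A P by blast
  have filter_Un: "{y \<in> A \<union> B. P y} = {y \<in> A. P y} \<union> {y \<in> B. P y}"
    for A B :: "(nat \<Rightarrow> nat) set" and P by blast
  show ?thesis
    unfolding occ_configs_below_def
    by (subst (1) occ_configs_Suc)
      (simp only: filter_Un filter_image add_ground_vanish_iff raise_levels_vanish_iff)
qed

lemma sum_boltz_weight_le_1: "S \<subseteq> {\<lambda>_. 0} \<Longrightarrow> sum (boltz_weight b) S \<le> 1"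
  using sum_mono2[of "{\<lambda>_. 0}" S "boltz_weight b"] boltz_weight_nonneg by auto

lemma geometric_bound_step:
  fixes q q' :: real
  assumes "0 \<le> q'" "q' \<le> q" "q < 1"
  shows "(1 / (1 - q)) ^ N + q' * (1 / (1 - q)) ^ Suc N \<le> (1 / (1 - q)) ^ Suc N"
proof -
  define r where "r = 1 / (1 - q)"
  have r: "r \<ge> 0" "r = 1 + q * r"
    using assms by (simp_all add: r_def field_simps)
  then have "1 + q' * r \<le> r"
    using mult_right_mono[OF assms(2) r(1)] by linarith
  then have "r ^ N * (1 + q' * r) \<le> r ^ N * r"
    using r(1) by (simp add: mult_left_mono)
  then show ?thesis
    unfolding r_def[symmetric] by (simp add: algebra_simps)
qed

lemma sum_boltz_weight_below_Suc_Suc: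
  "sum (boltz_weight b) (occ_configs_below (Suc N) (Suc M))
     = sum (boltz_weight b) (occ_configs_below N (Suc M))
       + exp (- b * real (Suc N)) * sum (boltz_weight b) (occ_configs_below (Suc N) M)"
proof -
  have "occ_configs_below N (Suc M) \<subseteq> occ_configs N" "occ_configs_below (Suc N) M \<subseteq> occ_configs (Suc N)"
    by (auto simp: occ_configs_below_def)
  from infsum_boltz_weight_decompose[OF this]
  show ?thesis
    by (simp add: finite_occ_configs_below occ_configs_below_Suc_Suc[symmetric] del: of_nat_Suc)
qed

lemma sum_boltz_weight_below_le:
  assumes "b > 0"
  shows "sum (boltz_weight b) (occ_configs_below N M) \<le> (1 / (1 - exp (- b))) ^ N"
proof (induction M arbitrary: N)
  have r: "1 \<le> 1 / (1 - exp (- b))"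
    using assms by simp
  case 0
  have "sum (boltz_weight b) (occ_configs_below N 0) \<le> 1"
    by (simp add: sum_boltz_weight_le_1 occ_configs_below_trivial)
  also have "1 \<le> (1 / (1 - exp (- b))) ^ N"
    using r by (rule one_le_power)
  finally show ?case .
next
  case (Suc M)
  note IH_M = Suc.IH
  show ?case
  proof (induction N)
    case 0
    then show ?case
      by (simp add: sum_boltz_weight_le_1 occ_configs_below_trivial)
  next
    case (Suc N)
    have "sum (boltz_weight b) (occ_configs_below (Suc N) (Suc M))
            \<le> (1 / (1 - exp (- b))) ^ N + exp (- b * real (Suc N)) * (1 / (1 - exp (- b))) ^ Suc N"
      unfolding sum_boltz_weight_below_Suc_Suc
      using Suc.IH IH_M[of "Suc N"] by (intro add_mono mult_left_mono) simp_all
    also have "\<dots> \<le> (1 / (1 - exp (- b))) ^ Suc N"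
      using assms by (intro geometric_bound_step) simp_all
    finally show ?case .
  qed
qed

lemma boltz_weight_summable:
  assumes "b > 0"
  shows "boltz_weight b summable_on occ_configs N"
proof (rule nonneg_bdd_above_summable_on)
  show "bdd_above (sum (boltz_weight b) ` {F. F \<subseteq> occ_configs N \<and> finite F})"
  proof (rule bdd_aboveI2)
    fix F assume F: "F \<in> {F. F \<subseteq> occ_configs N \<and> finite F}"
    then have "\<forall>\<^sub>F j in sequentially. \<forall>n\<in>F. n j = 0"
      using occ_configs_eventually_zero by (intro eventually_ball_finite) auto
    then obtain M where "\<forall>j\<ge>M. \<forall>n\<in>F. n j = 0"
      unfolding eventually_sequentially by blast
    with F have "F \<subseteq> occ_configs_below N M"
      by (auto simp: occ_configs_below_def)
    then have "sum (boltz_weight b) F \<le> sum (boltz_weight b) (occ_configs_below N M)"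
      using boltz_weight_nonneg by (intro sum_mono2 finite_occ_configs_below) auto
    also have "\<dots> \<le> (1 / (1 - exp (- b))) ^ N"
      using assms by (rule sum_boltz_weight_below_le)
    finally show "sum (boltz_weight b) F \<le> (1 / (1 - exp (- b))) ^ N" .
  qed
qed (simp add: boltz_weight_nonneg)

definition ground_moment :: "nat \<Rightarrow> real \<Rightarrow> real" where
  "ground_moment N b = (\<Sum>\<^sub>\<infinity> n\<in>occ_configs N. real (n 0) * boltz_weight b n)"

lemma ground_moment_summable:
  assumes "b > 0"
  shows "(\<lambda>n. real (n 0) * boltz_weight b n) summable_on occ_configs N"
proof (rule summable_on_comparison_test)
  show "(\<lambda>n. real N * boltz_weight b n) summable_on occ_configs N"
    using boltz_weight_summable[OF assms] by (rule summable_on_cmult_right)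
qed (auto simp: occ_configs_le boltz_weight_nonneg mult_right_mono)

lemma partition_fn_0 [simp]: "partition_fn 0 b = 1"
  by (simp add: partition_fn_def occ_configs_0)

lemma ground_moment_0 [simp]: "ground_moment 0 b = 0"
  by (simp add: ground_moment_def occ_configs_0)

lemma partition_fn_Suc:
  assumes "b > 0"
  shows "partition_fn (Suc N) b = partition_fn N b + exp (- b * real (Suc N)) * partition_fn (Suc N) b"
  using infsum_boltz_weight_decompose[OF order_refl order_refl, of b N]
    boltz_weight_summable[OF assms, of "Suc N"]
  unfolding partition_fn_def occ_configs_Suc[symmetric] by simp

lemma ground_moment_Suc:
  assumes "b > 0"
  shows "ground_moment (Suc N) b = ground_moment N b + partition_fn N b"
proof -
  let ?f = "\<lambda>n. real (n 0) * boltz_weight b n"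
  have "ground_moment (Suc N) b = infsum (?f \<circ> add_ground) (occ_configs N) + infsum (?f \<circ> raise_levels) (occ_configs (Suc N))"
    using infsum_add_ground_raise_levels[of ?f "occ_configs N" "occ_configs (Suc N)"]
      ground_moment_summable[OF assms, of "Suc N"]
    unfolding ground_moment_def occ_configs_Suc[symmetric] by simp
  also have "infsum (?f \<circ> add_ground) (occ_configs N) = infsum (\<lambda>n. ?f n + boltz_weight b n) (occ_configs N)"
    by (rule infsum_cong) (simp add: boltz_weight_add_ground algebra_simps)
  also have "\<dots> = ground_moment N b + partition_fn N b"
    unfolding ground_moment_def partition_fn_def
    using ground_moment_summable[OF assms] boltz_weight_summable[OF assms] by (rule infsum_add)
  also have "infsum (?f \<circ> raise_levels) (occ_configs (Suc N)) = 0"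
    by (rule infsum_0) simp
  finally show ?thesis by simp
qed

lemma partition_fn_pos:
  assumes "b > 0"
  shows "partition_fn N b > 0"
proof (induction N)
  case (Suc N)
  define q where "q = exp (- b * real (Suc N))"
  have "partition_fn N b = (1 - q) * partition_fn (Suc N) b"
    using partition_fn_Suc[OF assms, of N] by (simp add: q_def algebra_simps del: of_nat_Suc)
  with Suc.IH have "0 < (1 - q) * partition_fn (Suc N) b"
    by simp
  moreover have "0 < 1 - q"
    unfolding q_def using assms by simp
  ultimately show ?case
    by (rule zero_less_mult_pos)
qed simp

lemma mean_n0_eq: "mean_n0 N b = ground_moment N b / partition_fn N b"
  by (simp add: mean_n0_def ground_moment_def)

lemma mean_n0_0 [simp]: "mean_n0 0 b = 0"
  by (simp add: mean_n0_eq)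

lemma mean_n0_Suc:
  assumes "b > 0"
  shows "mean_n0 (Suc N) b = (1 - exp (- b * real (Suc N))) * (1 + mean_n0 N b)"
proof -
  define Z Z' where "Z = partition_fn N b" and "Z' = partition_fn (Suc N) b"
  have pos: "Z > 0" "Z' > 0"
    unfolding Z_def Z'_def using partition_fn_pos[OF assms] by auto
  have "Z / Z' = 1 - exp (- b * real (Suc N))"
    using partition_fn_Suc[OF assms, of N] pos unfolding Z_def[symmetric] Z'_def[symmetric]
    by (simp add: field_simps del: of_nat_Suc)
  moreover have "mean_n0 (Suc N) b = Z / Z' * (1 + mean_n0 N b)"
    using pos unfolding mean_n0_eq ground_moment_Suc[OF assms] Z_def[symmetric] Z'_def[symmetric]
    by (simp add: field_simps)
  ultimately show ?thesis by simp
qed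

lemma mean_n0_nonneg:
  assumes "b > 0"
  shows "0 \<le> mean_n0 N b"
proof (induction N)
  case (Suc N)
  have "exp (- b * real (Suc N)) \<le> 1"
    using assms by simp
  with Suc.IH show ?case
    by (simp add: mean_n0_Suc[OF assms] del: of_nat_Suc)
qed simp

lemma mean_n0_le:
  assumes "b > 0"
  shows "mean_n0 N b \<le> real N"
proof (induction N)
  case (Suc N)
  have "mean_n0 (Suc N) b \<le> 1 * (1 + mean_n0 N b)"
    unfolding mean_n0_Suc[OF assms] using assms mean_n0_nonneg[OF assms, of N]
    by (intro mult_right_mono) simp_all
  with Suc.IH show ?case by simp
qed simp

lemma mean_n0_le_exp:
  assumes "b > 0" and "m \<le> N"
  shows "mean_n0 m b \<le> exp (b * real N) - 1"
  using assms(2)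
proof (induction m)
  case (Suc m)
  define q where "q = exp (- b * real N)"
  have "q * exp (b * real N) = 1"
    unfolding q_def by (simp flip: exp_add)
  moreover have "1 - exp (- b * real (Suc m)) \<le> 1 - q"
    unfolding q_def using Suc.prems assms(1) by simp
  moreover have "1 + mean_n0 m b \<le> exp (b * real N)"
    using Suc by simp
  ultimately have "(1 - exp (- b * real (Suc m))) * (1 + mean_n0 m b) \<le> (1 - q) * exp (b * real N)"
    using assms(1) mean_n0_nonneg[OF assms(1), of m]
    by (intro mult_mono) (simp_all add: q_def)
  also have "\<dots> = exp (b * real N) - 1"
    using \<open>q * exp (b * real N) = 1\<close> by (simp add: algebra_simps)
  finally show ?case
    by (simp add: mean_n0_Suc[OF assms(1)] del: of_nat_Suc)
qed (use assms(1) in simp)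

lemma mean_n0_deficit_le:
  assumes "b > 0"
  shows "real m - mean_n0 m b \<le> real K + real m ^ 2 * exp (- b * real K)"
proof (induction m)
  case (Suc m)
  show ?case
  proof (cases "Suc m \<le> K")
    case True
    then show ?thesis
      using mean_n0_nonneg[OF assms, of "Suc m"] by (simp add: add_increasing2)
  next
    case False
    \<comment> \<open>Once \<open>m \<ge> K\<close>, a step adds at most \<open>exp (- b K) (m + 1)\<close> to the deficit.\<close>
    define e where "e = exp (- b * real K)"
    have "exp (- b * real (Suc m)) * (1 + mean_n0 m b) \<le> e * real (Suc m)"
      unfolding e_def using False assms mean_n0_nonneg[OF assms, of m] mean_n0_le[OF assms, of m]
      by (intro mult_mono) simp_all
    moreover have "real (Suc m) - mean_n0 (Suc m) b
                     = (real m - mean_n0 m b) + exp (- b * real (Suc m)) * (1 + mean_n0 m b)"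
      by (simp add: mean_n0_Suc[OF assms] algebra_simps del: of_nat_Suc)
    moreover have "real m ^ 2 * e + e * real (Suc m) \<le> real (Suc m) ^ 2 * e"
      by (simp add: e_def power2_eq_square algebra_simps)
    ultimately show ?thesis
      using Suc.IH unfolding e_def by linarith
  qed
qed simp

lemma mean_n0_deficit_le_ln:
  assumes "b > 0"
  shows "real N - mean_n0 N b \<le> 2 * ln (real N) / b + 2"
proof (cases "N = 0")
  case False
  define K where "K = nat \<lceil>2 * ln (real N) / b\<rceil>"
  have "ln (real N) \<ge> 0"
    using False by simp
  then have K: "2 * ln (real N) / b \<le> real K" "real K \<le> 2 * ln (real N) / b + 1"
    unfolding K_def using assms by (simp_all add: of_nat_nat ceiling_correct)
  have "2 * ln (real N) \<le> b * real K"
    using K(1) assms by (simp add: divide_le_eq mult.commute)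
  then have "exp (- b * real K) \<le> exp (- (2 * ln (real N)))"
    by simp
  also have "\<dots> = inverse (exp (ln (real N ^ 2)))"
    using False by (simp add: exp_minus ln_realpow)
  also have "\<dots> = 1 / real N ^ 2"
    using False by (simp add: inverse_eq_divide)
  finally have "real N ^ 2 * exp (- b * real K) \<le> 1"
    using False by (simp add: field_simps)
  then show ?thesis
    using mean_n0_deficit_le[OF assms, of N K] K(2) by linarith
qed simp

lemma exp_div_tendsto_0:
  fixes x :: "nat \<Rightarrow> real"
  assumes "(\<lambda>N. x N / ln (real N)) \<longlonglongrightarrow> 0"
  shows "(\<lambda>N. exp (x N) / real N) \<longlonglongrightarrow> 0"
proof -
  have ln: "filterlim (\<lambda>N. ln (real N)) at_top sequentially"
    using ln_at_top filterlim_real_sequentially by (rule filterlim_compose)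
  have "(\<lambda>N. x N / ln (real N) - 1) \<longlonglongrightarrow> -1"
    using tendsto_diff[OF assms tendsto_const[of 1]] by simp
  then have "filterlim (\<lambda>N. (x N / ln (real N) - 1) * ln (real N)) at_bot sequentially"
    by (rule filterlim_tendsto_neg_mult_at_bot[OF _ _ ln]) simp
  then have "(\<lambda>N. exp ((x N / ln (real N) - 1) * ln (real N))) \<longlonglongrightarrow> 0"
    using exp_at_bot by (rule filterlim_compose[rotated])
  moreover have "\<forall>\<^sub>F N in sequentially. exp ((x N / ln (real N) - 1) * ln (real N)) = exp (x N) / real N"
    using eventually_ge_at_top[of "2::nat"]
  proof eventually_elim
    case (elim N)
    then have "ln (real N) > 0" by simp
    then have "(x N / ln (real N) - 1) * ln (real N) = x N - ln (real N)"
      by (simp add: field_simps)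
    then show ?case
      using elim by (simp add: exp_diff)
  qed
  ultimately show ?thesis
    by (rule Lim_transform_eventually)
qed

lemma mean_n0_fraction_tendsto_0:
  fixes \<gamma> :: "nat \<Rightarrow> real"
  assumes "\<And>N. \<gamma> N > 0" and "a > 0"
    and "(\<lambda>N. real N * \<gamma> N / ln (real N)) \<longlonglongrightarrow> 0"
  shows "(\<lambda>N. mean_n0 N (a * \<gamma> N) / real N) \<longlonglongrightarrow> 0"
proof (rule tendsto_sandwich[OF _ _ tendsto_const])
  have "(\<lambda>N. a * \<gamma> N * real N / ln (real N)) \<longlonglongrightarrow> a * 0"
    using tendsto_mult_left[OF assms(3), of a] by (simp add: algebra_simps)
  then show "(\<lambda>N. exp (a * \<gamma> N * real N) / real N) \<longlonglongrightarrow> 0"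
    by (intro exp_div_tendsto_0) simp
  have b: "a * \<gamma> N > 0" for N
    using assms(1,2) by simp
  show "\<forall>\<^sub>F N in sequentially. 0 \<le> mean_n0 N (a * \<gamma> N) / real N"
    using mean_n0_nonneg[OF b] by simp
  show "\<forall>\<^sub>F N in sequentially. mean_n0 N (a * \<gamma> N) / real N \<le> exp (a * \<gamma> N * real N) / real N"
  proof (intro always_eventually allI divide_right_mono)
    fix N
    show "mean_n0 N (a * \<gamma> N) \<le> exp (a * \<gamma> N * real N)"
      using mean_n0_le_exp[OF b order_refl, of N N] by simp
  qed simp
qed

lemma mean_n0_fraction_tendsto_1:
  fixes \<gamma> :: "nat \<Rightarrow> real"
  assumes "\<And>N. \<gamma> N > 0" and "a > 0"
    and "filterlim (\<lambda>N. real N * \<gamma> N / ln (real N)) at_top sequentially"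
  shows "(\<lambda>N. mean_n0 N (a * \<gamma> N) / real N) \<longlonglongrightarrow> 1"
proof (rule tendsto_sandwich[OF _ _ _ tendsto_const])
  have b: "a * \<gamma> N > 0" for N
    using assms(1,2) by simp
  let ?L = "\<lambda>N. 1 - (2 / a * inverse (real N * \<gamma> N / ln (real N)) + 2 / real N)"
  have "(\<lambda>N. 2 / a * inverse (real N * \<gamma> N / ln (real N))) \<longlonglongrightarrow> 2 / a * 0"
    using tendsto_inverse_0_at_top[OF assms(3)] by (rule tendsto_mult_left)
  from tendsto_diff[OF tendsto_const[of 1] tendsto_add[OF this lim_const_over_n[of 2]]]
  show "?L \<longlonglongrightarrow> 1"
    by simp
  show "\<forall>\<^sub>F N in sequentially. mean_n0 N (a * \<gamma> N) / real N \<le> 1"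
  proof (intro always_eventually allI)
    fix N
    show "mean_n0 N (a * \<gamma> N) / real N \<le> 1"
      using mean_n0_le[OF b, of N] by (cases "N = 0") (simp_all add: divide_le_eq_1)
  qed
  show "\<forall>\<^sub>F N in sequentially. ?L N \<le> mean_n0 N (a * \<gamma> N) / real N"
    using eventually_gt_at_top[of "0::nat"]
  proof eventually_elim
    case (elim N)
    have "1 - mean_n0 N (a * \<gamma> N) / real N = (real N - mean_n0 N (a * \<gamma> N)) / real N"
      using elim by (simp add: field_simps)
    also have "\<dots> \<le> (2 * ln (real N) / (a * \<gamma> N) + 2) / real N"
      using mean_n0_deficit_le_ln[OF b] by (rule divide_right_mono) simp
    also have "\<dots> = 2 / a * inverse (real N * \<gamma> N / ln (real N)) + 2 / real N"
      using elim assms(1,2) by (simp add: field_simps)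
    finally show ?case by simp
  qed
qed

theorem corollary1:
  fixes \<gamma> :: "nat \<Rightarrow> real"
  assumes pos: "\<And>N. \<gamma> N > 0"
    and lim0: "\<gamma> \<longlonglongrightarrow> 0"
  shows "((\<lambda>N. real N * \<gamma> N / ln (real N)) \<longlonglongrightarrow> 0 \<longrightarrow>
           (\<forall>a>0. (\<lambda>N. mean_n0 N (a * \<gamma> N) / real N) \<longlonglongrightarrow> 0))
       \<and> (filterlim (\<lambda>N. real N * \<gamma> N / ln (real N)) at_top sequentially \<longrightarrow>
           (\<forall>a>0. (\<lambda>N. mean_n0 N (a * \<gamma> N) / real N) \<longlonglongrightarrow> 1))"
proof (intro conjI impI allI)
  show "(\<lambda>N. mean_n0 N (a * \<gamma> N) / real N) \<longlonglongrightarrow> 0"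
    if "(\<lambda>N. real N * \<gamma> N / ln (real N)) \<longlonglongrightarrow> 0" and "a > 0" for a
    using pos that(2,1) by (rule mean_n0_fraction_tendsto_0)
  show "(\<lambda>N. mean_n0 N (a * \<gamma> N) / real N) \<longlonglongrightarrow> 1"
    if "filterlim (\<lambda>N. real N * \<gamma> N / ln (real N)) at_top sequentially" and "a > 0" for a
    using pos that(2,1) by (rule mean_n0_fraction_tendsto_1)
qed

end
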